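(* Let $k\ge1$, $\beta\ge1$ integers, $0\le\ell\le k-1$, and consider weighted $k$-server on a uniform metric space $S$ with server weights $1,\beta,\ldots,\beta^{k-1}$. Define $c_0=0$ and $c_\ell=\beta^{\ell-1}+\beta\cdot(\lceil n_{\ell-1}/2\rceil+1)\cdot c_{\ell-1}$ for $\ell>0$. Let $P\subseteq S$ with $|P|=n_\ell$, and suppose a server configuration is given in which at least one server other than the $\ell$ lightest servers (those of weights $1,\ldots,\beta^{\ell-1}$) occupies a point of $P$. Then for every request sequence that can be generated by a call $\mathsf{strategy}(\ell,P)$, there is a way to serve it starting from this configuration with total cost at most $c_\ell$.
   Context: The sequence $n_0,n_1,\ldots$ is defined by $n_0=1$ and $n_i=\left(\lceil n_{i-1}/2\rceil+1\right)\left(\lfloor n_{i-1}/2\rfloor+1\right)$ for $i>0$. Weighted $k$-server on a uniform metric: $k$ servers with given weights sit at points; each requested point must be occupied by a server after serving it; moving a server of weight $w$ to a different point costs $w$. For every $\ell\ge1$ and every set $P$ with $|P|=n_\ell$, fix a set system $\mathcal{Q}(\ell,P)\subseteq 2^P$ consisting of $\lceil n_{\ell-1}/2\rceil+1$ sets each of size $n_{\ell-1}$, such that every $p\in P$ is missed by some set of $\mathcal{Q}(\ell,P)$, and for every $p\in P$ there is $q\in P$ with every set of $\mathcal{Q}(\ell,P)$ containing $p$ or $q$ (such systems exist). The procedure $\mathsf{strategy}(\ell,P)$ (with $|P|=n_\ell$) is: if $\ell=0$, request the unique point of $P$; if $\ell>0$, repeat $\beta\cdot(\lceil n_{\ell-1}/2\rceil+1)$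 times: pick $P'$ uniformly at random from $\mathcal{Q}(\ell,P)$, independently of all previous random choices, and run $\mathsf{strategy}(\ell-1,P')$. *)

theory Defs
  imports Main
begin

text \<open>The sequence n_i: n_0 = 1, n_i = (ceil(n_{i-1}/2)+1)(floor(n_{i-1}/2)+1).
  For naturals, ceil(m/2) = (m+1) div 2 and floor(m/2) = m div 2.\<close>
fun nseq :: "nat \<Rightarrow> nat" where
  "nseq 0 = 1"
| "nseq (Suc i) = ((nseq i + 1) div 2 + 1) * (nseq i div 2 + 1)"

fun cseq :: "nat \<Rightarrow> nat \<Rightarrow> nat" where
  "cseq \<beta> 0 = 0"
| "cseq \<beta> (Suc l) = \<beta> ^ l + \<beta> * ((nseq l + 1) div 2 + 1) * cseq \<beta> l"

text \<open>A configuration assigns to each server index i < k a point; server i has weight beta^i.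
  Moving between configurations on the uniform metric costs the total weight of servers
  whose position changes.\<close>
definition move_cost :: "nat \<Rightarrow> nat \<Rightarrow> (nat \<Rightarrow> 'a) \<Rightarrow> (nat \<Rightarrow> 'a) \<Rightarrow> nat" where
  "move_cost \<beta> k c c' = (\<Sum>i<k. if c i \<noteq> c' i then \<beta> ^ i else 0)"

fun path_cost :: "nat \<Rightarrow> nat \<Rightarrow> (nat \<Rightarrow> 'a) \<Rightarrow> (nat \<Rightarrow> 'a) list \<Rightarrow> nat" where
  "path_cost \<beta> k c [] = 0"
| "path_cost \<beta> k c (c' # cs) = move_cost \<beta> k c c' + path_cost \<beta> k c' cs"

definition serves :: "nat \<Rightarrow> 'a list \<Rightarrow> (nat \<Rightarrow> 'a) list \<Rightarrow> bool" where
  "serves k reqs cs \<longleftrightarrow> length cs = length reqs \<and>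
     (\<forall>t < length reqs. \<exists>i < k. (cs ! t) i = reqs ! t)"

text \<open>Request sequences that can be generated by strategy(l,P), given the fixed set systems Q.\<close>
inductive strat :: "(nat \<Rightarrow> 'a set \<Rightarrow> 'a set set) \<Rightarrow> nat \<Rightarrow> nat \<Rightarrow> 'a set \<Rightarrow> 'a list \<Rightarrow> bool"
  for Q :: "nat \<Rightarrow> 'a set \<Rightarrow> 'a set set" and \<beta> :: nat where
  strat0: "P = {p} \<Longrightarrow> strat Q \<beta> 0 P [p]"
| stratS: "card P = nseq (Suc l) \<Longrightarrow>
           length xss = \<beta> * ((nseq l + 1) div 2 + 1) \<Longrightarrow>
           (\<forall>xs \<in> set xss. \<exists>P' \<in> Q (Suc l) P. strat Q \<beta> l P' xs) \<Longrightarrow>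
           strat Q \<beta> (Suc l) P (concat xss)"

definition admissible_Q :: "(nat \<Rightarrow> 'a set \<Rightarrow> 'a set set) \<Rightarrow> bool" where
  "admissible_Q Q \<longleftrightarrow> (\<forall>l \<ge> 1. \<forall>P. finite P \<and> card P = nseq l \<longrightarrow>
      Q l P \<subseteq> Pow P \<and>
      card (Q l P) = (nseq (l - 1) + 1) div 2 + 1 \<and>
      (\<forall>A \<in> Q l P. card A = nseq (l - 1)) \<and>
      (\<forall>p \<in> P. \<exists>A \<in> Q l P. p \<notin> A) \<and>
      (\<forall>p \<in> P. \<exists>q \<in> P. \<forall>A \<in> Q l P. p \<in> A \<or> q \<in> A))"

end

theory Submission
  imports Defs
begin

text \<open>Let a server of index \<open>\<ge> l+1\<close> sit at \<open>p \<in> P\<close>, and let \<open>q\<close> be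
  the partner of \<open>p\<close>, so that every set of \<open>Q(l+1,P)\<close> contains \<open>p\<close> or \<open>q\<close>. Moving server
  \<open>l\<close> to \<open>q\<close> once costs \<open>\<beta>^l\<close>; afterwards every recursive call \<open>strategy(l,P')\<close> finds a
  server of index \<open>\<ge> l\<close> inside \<open>P'\<close>, and is served by induction using only the servers
  below \<open>l\<close>, which therefore never disturb \<open>p\<close> and \<open>q\<close>.\<close>

definition agree_from :: "nat \<Rightarrow> (nat \<Rightarrow> 'a) \<Rightarrow> (nat \<Rightarrow> 'a) \<Rightarrow> bool" where
  "agree_from m c c' \<longleftrightarrow> (\<forall>i\<ge>m. c' i = c i)"

definition servable :: "nat \<Rightarrow> nat \<Rightarrow> nat \<Rightarrow> (nat \<Rightarrow> 'a) \<Rightarrow> 'a list \<Rightarrow> nat \<Rightarrow> bool" where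
  "servable \<beta> k m c reqs C \<longleftrightarrow>
     (\<exists>cs. serves k reqs cs \<and> path_cost \<beta> k c cs \<le> C \<and> (\<forall>c'\<in>set cs. agree_from m c c'))"

lemma agree_from_refl [simp]: "agree_from m c c"
  by (simp add: agree_from_def)

lemma agree_from_trans: "agree_from m c c' \<Longrightarrow> agree_from m c' c'' \<Longrightarrow> agree_from m c c''"
  by (simp add: agree_from_def)

lemma move_cost_triangle: "move_cost \<beta> k c a \<le> move_cost \<beta> k c b + move_cost \<beta> k b a"
  unfolding move_cost_def sum.distrib[symmetric]
  by (rule sum_mono) auto

lemma path_cost_le_move_cost_plus:
  "path_cost \<beta> k c cs \<le> move_cost \<beta> k c b + path_cost \<beta> k b cs"
  using move_cost_triangle[of \<beta> k c _ b] by (cases cs) auto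

lemma move_cost_fun_upd_le: "l < k \<Longrightarrow> move_cost \<beta> k c (c(l := q)) \<le> \<beta> ^ l"
proof -
  have "move_cost \<beta> k c (c(l := q)) \<le> (\<Sum>i<k. if i = l then \<beta> ^ l else 0)"
    unfolding move_cost_def by (rule sum_mono) auto
  also assume "l < k"
  then have "(\<Sum>i<k. if i = l then \<beta> ^ l else 0) = \<beta> ^ l" by (simp add: sum.delta)
  finally show ?thesis .
qed

lemma path_cost_append:
  "path_cost \<beta> k c (cs1 @ cs2) = path_cost \<beta> k c cs1 + path_cost \<beta> k (last (c # cs1)) cs2"
  by (induction cs1 arbitrary: c) auto

lemma serves_append:
  "serves k xs cs1 \<Longrightarrow> serves k ys cs2 \<Longrightarrow> serves k (xs @ ys) (cs1 @ cs2)"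
  unfolding serves_def by (auto simp: nth_append)

lemma servable_append:
  assumes xs: "servable \<beta> k m c xs C1"
    and ys: "\<And>c'. agree_from m c c' \<Longrightarrow> servable \<beta> k m c' ys C2"
  shows "servable \<beta> k m c (xs @ ys) (C1 + C2)"
proof -
  obtain cs1 where cs1: "serves k xs cs1" "path_cost \<beta> k c cs1 \<le> C1"
    "\<forall>c'\<in>set cs1. agree_from m c c'"
    using xs by (auto simp: servable_def)
  define c' where "c' = last (c # cs1)"
  have "agree_from m c c'"
    using cs1(3) by (cases cs1 rule: rev_cases) (auto simp: c'_def)
  then obtain cs2 where cs2: "serves k ys cs2" "path_cost \<beta> k c' cs2 \<le> C2"
    "\<forall>c''\<in>set cs2. agree_from m c c''"
    using ys by (fastforce simp: servable_def intro: agree_from_trans)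
  show ?thesis
    unfolding servable_def
    using cs1 cs2 by (intro exI[of _ "cs1 @ cs2"]) (auto simp: serves_append path_cost_append c'_def)
qed

lemma servable_concat:
  assumes "\<And>xs c'. xs \<in> set xss \<Longrightarrow> agree_from m c c' \<Longrightarrow> servable \<beta> k m c' xs C"
  shows "servable \<beta> k m c (concat xss) (length xss * C)"
  using assms
proof (induction xss arbitrary: c)
  case Nil
  then show ?case by (auto simp: servable_def serves_def)
next
  case (Cons xs xss)
  have "servable \<beta> k m c (xs @ concat xss) (C + length xss * C)"
    by (rule servable_append) (use Cons in \<open>auto intro: agree_from_trans\<close>)
  then show ?case by simp
qed

lemma servable_after_move:
  assumes "servable \<beta> k m d reqs C" and "agree_from m' c d" and "m \<le> m'"
  shows "servable \<beta> k m' c reqs (move_cost \<beta> k c d + C)"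
proof -
  obtain cs where cs: "serves k reqs cs" "path_cost \<beta> k d cs \<le> C"
    "\<forall>c'\<in>set cs. agree_from m d c'"
    using assms(1) by (auto simp: servable_def)
  have "path_cost \<beta> k c cs \<le> move_cost \<beta> k c d + C"
    using path_cost_le_move_cost_plus[of \<beta> k c cs d] cs(2) by simp
  moreover have "\<forall>c'\<in>set cs. agree_from m' c c'"
    using cs(3) assms(2,3) by (auto simp: agree_from_def)
  ultimately show ?thesis
    using cs(1) by (auto simp: servable_def)
qed

lemma strat_servable:
  assumes adm: "admissible_Q Q"
  shows "strat Q \<beta> l P reqs \<Longrightarrow> finite P \<Longrightarrow> l < k \<Longrightarrow> l \<le> i \<Longrightarrow> i < k \<Longrightarrow> c i \<in> P \<Longrightarrow>
    servable \<beta> k l c reqs (cseq \<beta> l)"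
proof (induction arbitrary: c i rule: strat.induct)
  case (strat0 P p)
  then show ?case
    unfolding servable_def serves_def
    by (intro exI[of _ "[c]"]) (auto simp: move_cost_def)
next
  case (stratS P l xss)
  have "l < k" using stratS.prems by simp
  have Q: "Q (Suc l) P \<subseteq> Pow P" "\<forall>p \<in> P. \<exists>q \<in> P. \<forall>A \<in> Q (Suc l) P. p \<in> A \<or> q \<in> A"
    using adm stratS.hyps(1) stratS.prems(1) by (simp_all add: admissible_Q_def)
  obtain q where q: "\<forall>A \<in> Q (Suc l) P. c i \<in> A \<or> q \<in> A"
    using Q(2) stratS.prems(5) by blast
  define d where "d = c(l := q)"
  have "servable \<beta> k l d (concat xss) (length xss * cseq \<beta> l)"
  proof (rule servable_concat)
    fix xs c' assume "xs \<in> set xss" and c': "agree_from l d c'"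
    then obtain P' where P': "P' \<in> Q (Suc l) P"
      and IH: "\<And>c j. finite P' \<Longrightarrow> l < k \<Longrightarrow> l \<le> j \<Longrightarrow> j < k \<Longrightarrow> c j \<in> P' \<Longrightarrow>
        servable \<beta> k l c xs (cseq \<beta> l)"
      using stratS.IH by blast
    have "finite P'" using P' Q(1) stratS.prems(1) finite_subset by blast
    have "c' l = q" "c' i = c i"
      using c' stratS.prems(3) by (auto simp: agree_from_def d_def)
    then have "c' i \<in> P' \<or> c' l \<in> P'" using q P' by auto
    then show "servable \<beta> k l c' xs (cseq \<beta> l)"
    proof
      assume "c' i \<in> P'"
      then show ?thesis using IH[OF \<open>finite P'\<close> \<open>l < k\<close>, of i] stratS.prems(3,4) by simp
    next
      assume "c' l \<in> P'"
      then show ?thesis using IH[OF \<open>finite P'\<close> \<open>l < k\<close>, of l] \<open>l < k\<close> by simp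
    qed
  qed
  moreover have "agree_from (Suc l) c d" by (simp add: agree_from_def d_def)
  ultimately have "servable \<beta> k (Suc l) c (concat xss) (move_cost \<beta> k c d + length xss * cseq \<beta> l)"
    by (rule servable_after_move) simp
  moreover have "move_cost \<beta> k c d + length xss * cseq \<beta> l \<le> cseq \<beta> (Suc l)"
    using move_cost_fun_upd_le[OF \<open>l < k\<close>] stratS.hyps(2) by (simp add: d_def)
  ultimately show ?case by (auto simp: servable_def)
qed

theorem lemma6:
  fixes Q :: "nat \<Rightarrow> 'a set \<Rightarrow> 'a set set"
    and k \<beta> l :: nat and P :: "'a set" and c0 :: "nat \<Rightarrow> 'a"
  assumes "admissible_Q Q"
    and "k \<ge> 1" and "\<beta> \<ge> 1" and "l \<le> k - 1"
    and "finite P" and "card P = nseq l"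
    and "\<exists>i. l \<le> i \<and> i < k \<and> c0 i \<in> P"
  shows "\<forall>reqs. strat Q \<beta> l P reqs \<longrightarrow>
           (\<exists>cs. serves k reqs cs \<and> path_cost \<beta> k c0 cs \<le> cseq \<beta> l)"
proof (intro allI impI)
  fix reqs assume "strat Q \<beta> l P reqs"
  moreover have "l < k" using assms(2,4) by simp
  moreover obtain i where "l \<le> i" "i < k" "c0 i \<in> P" using assms(7) by blast
  ultimately have "servable \<beta> k l c0 reqs (cseq \<beta> l)"
    using strat_servable[OF assms(1)] assms(5) by blast
  then show "\<exists>cs. serves k reqs cs \<and> path_cost \<beta> k c0 cs \<le> cseq \<beta> l"
    by (auto simp: servable_def)
qed

end
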